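(* In the model described in the context, with $\tilde k(p)=(1+\theta)p+\alpha(p-p^2)$ for $\theta\ge0$ and $\alpha\ge0$, the indemnity $I\equiv0$ is never optimal.
   Context: Let $X\ge0$ be a random variable with $\mathbb{P}(X=0)=1-q$, where $q\in(0,1]$, and with density $q\lambda e^{-\lambda x}$ on $(0,\infty)$, where $\lambda>0$. So $S_X(t)=qe^{-\lambda t}$ for $t\ge0$. $\mathcal{I}_c$ is the set of $I:[0,\infty)\to[0,\infty)$ with $0\le I(x)\le x$ and $0\le I(x)-I(y)\le x-y$ for $0\le y\le x$. For $Y\ge0$ with $S_Y(t)=\mathbb{P}(Y>t)$, the premium is $$\pi(Y)=\int_0^\infty\tilde k(S_Y(t))\,dt.$$ This is the expected value principle with loading $\theta$ plus $\alpha$ times the Gini deviation. The buyer has wealth $w$ and utility $u$ with $u'(x)=e^{-\gamma x}$, $\gamma>0$. She chooses $I\in\mathcal{I}_c$ to maximize $\mathbb{E}[u(w-X+I(X)-\pi(I(X)))]$; the buyer's distortion is the identity. *)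

theory Defs
  imports "HOL-Probability.Probability"
begin

definition Ic :: "(real \<Rightarrow> real) set" where
  "Ic = {I. (\<forall>x\<ge>0. 0 \<le> I x \<and> I x \<le> x) \<and>
            (\<forall>x y. 0 \<le> y \<and> y \<le> x \<longrightarrow> 0 \<le> I x - I y \<and> I x - I y \<le> x - y)}"

text \<open>The premium distortion: expected value principle plus alpha times Gini deviation.\<close>
definition ktilde :: "real \<Rightarrow> real \<Rightarrow> real \<Rightarrow> real" where
  "ktilde \<theta> \<alpha> p = (1 + \<theta>) * p + \<alpha> * (p - p\<^sup>2)"

definition survival :: "'a measure \<Rightarrow> ('a \<Rightarrow> real) \<Rightarrow> real \<Rightarrow> real" where
  "survival M Y t = measure M {\<omega> \<in> space M. Y \<omega> > t}"

definition premium :: "'a measure \<Rightarrow> (real \<Rightarrow> real) \<Rightarrow> ('a \<Rightarrow> real) \<Rightarrow> real" where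
  "premium M k Y = (LINT t:{0..}|lborel. k (survival M Y t))"

text \<open>Expectation with values in the extended reals: E[h] = E[h^+] - E[h^-]
  (may be -\<infinity>, e.g. for unbounded-below utilities).\<close>
definition ext_expectation :: "'a measure \<Rightarrow> ('a \<Rightarrow> real) \<Rightarrow> ereal" where
  "ext_expectation M h =
     enn2ereal (\<integral>\<^sup>+\<omega>. ennreal (max (h \<omega>) 0) \<partial>M) -
     enn2ereal (\<integral>\<^sup>+\<omega>. ennreal (max (- h \<omega>) 0) \<partial>M)"

definition exp_utility ::
  "'a measure \<Rightarrow> (real \<Rightarrow> real) \<Rightarrow> real \<Rightarrow> (real \<Rightarrow> real) \<Rightarrow> ('a \<Rightarrow> real) \<Rightarrow> (real \<Rightarrow> real) \<Rightarrow> ereal"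
  where
  "exp_utility M u w k X I =
     ext_expectation M (\<lambda>\<omega>. u (w - X \<omega> + I (X \<omega>) - premium M k (\<lambda>\<omega>'. I (X \<omega>'))))"

end

theory Submission
  imports Defs "HOL-Real_Asymp.Real_Asymp"
begin

text \<open>
  Since u' x = exp (-\<gamma> x), the utility is u x = C - exp (-\<gamma> x) / \<gamma>, so an indemnity I is
  better than none iff E[exp (\<gamma> (\<pi>(I) + X - I X))] < E[exp (\<gamma> X)].
  If \<gamma> \<ge> \<lambda>, then E[exp (\<gamma> X)] = \<infinity>: without insurance the expected utility is -\<infinity>, and full
  insurance is strictly better. If \<gamma> < \<lambda>, take the deductible I x = max (x - d) 0. By the layer-cake
  formula the retained risk gives E[exp (\<gamma> min X d)] = 1 + r (1 - exp (-(\<lambda> - \<gamma>) d)) with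
  r = q \<gamma> / (\<lambda> - \<gamma>), against 1 + r without insurance, while ktilde p \<le> (1 + \<theta> + \<alpha>) p bounds
  the premium by (1 + \<theta> + \<alpha>) q exp (-\<lambda> d) / \<lambda>. For large d this premium, of order
  exp (-\<lambda> d), is negligible against the saving r exp (-(\<lambda> - \<gamma>) d).
\<close>

lemma cara_utility_eq:
  fixes u :: "real \<Rightarrow> real" and \<gamma> :: real
  assumes u_deriv: "\<forall>x. (u has_real_derivative exp (- \<gamma> * x)) (at x)" and "\<gamma> \<noteq> 0"
  shows "u x = u 0 + 1 / \<gamma> - exp (- \<gamma> * x) / \<gamma>"
proof -
  define h where "h x = u x + exp (- \<gamma> * x) / \<gamma>" for x
  have "(h has_real_derivative 0) (at x)" for x
  proof -
    have "(h has_real_derivative exp (- \<gamma> * x) + exp (- \<gamma> * x) * (- \<gamma>) / \<gamma>) (at x)"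
      unfolding h_def using u_deriv by (auto intro!: derivative_eq_intros)
    then show ?thesis
      using \<open>\<gamma> \<noteq> 0\<close> by simp
  qed
  then have "h x = h 0"
    by (intro DERIV_isconst_all) auto
  then show ?thesis
    unfolding h_def by simp
qed

lemma ext_expectation_const_diff:
  assumes "prob_space M" and g_measurable: "g \<in> borel_measurable M"
    and g_nonneg: "\<And>\<omega>. \<omega> \<in> space M \<Longrightarrow> 0 \<le> g \<omega>"
  shows "ext_expectation M (\<lambda>\<omega>. K - g \<omega>) = ereal K - enn2ereal (\<integral>\<^sup>+\<omega>. ennreal (g \<omega>) \<partial>M)"
proof -
  interpret prob_space M by fact
  define pos where "pos = (\<integral>\<^sup>+\<omega>. ennreal (max (K - g \<omega>) 0) \<partial>M)"
  define neg where "neg = (\<integral>\<^sup>+\<omega>. ennreal (max (- (K - g \<omega>)) 0) \<partial>M)"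
  define G where "G = (\<integral>\<^sup>+\<omega>. ennreal (g \<omega>) \<partial>M)"
  define Kp Km where "Kp = max K 0" and "Km = max (- K) 0"
  have K: "K = Kp - Km" "0 \<le> Kp" "0 \<le> Km"
    unfolding Kp_def Km_def by auto
  have "pos \<le> (\<integral>\<^sup>+\<omega>. ennreal Kp \<partial>M)"
    unfolding pos_def Kp_def by (intro nn_integral_mono ennreal_leI max.mono) (auto simp: g_nonneg)
  then have "pos \<le> ennreal Kp"
    by (simp add: emeasure_space_1)
  then have "enn2ereal pos \<le> ereal Kp"
    using K by (metis enn2ereal_ennreal less_eq_ennreal.rep_eq)
  moreover have "ennreal (max (K - g \<omega>) 0) + ennreal (g \<omega>) + ennreal Km
      = ennreal (max (- (K - g \<omega>)) 0) + ennreal Kp" if "\<omega> \<in> space M" for \<omega>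
    using g_nonneg[OF that] unfolding Kp_def Km_def by (cases "0 \<le> K"; cases "g \<omega> \<le> K")
      (simp_all add: ennreal_neg ennreal_plus[symmetric] del: ennreal_plus)
  then have "(\<integral>\<^sup>+\<omega>. ennreal (max (K - g \<omega>) 0) + ennreal (g \<omega>) + ennreal Km \<partial>M)
      = (\<integral>\<^sup>+\<omega>. ennreal (max (- (K - g \<omega>)) 0) + ennreal Kp \<partial>M)"
    by (rule nn_integral_cong)
  then have "pos + G + ennreal Km = neg + ennreal Kp"
    unfolding pos_def neg_def G_def using g_measurable
    by (simp add: nn_integral_add emeasure_space_1)
  then have "enn2ereal pos + enn2ereal G + ereal Km = enn2ereal neg + ereal Kp"
    using K by (metis plus_ennreal.rep_eq enn2ereal_ennreal)
  ultimately show ?thesis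
    unfolding ext_expectation_def pos_def[symmetric] neg_def[symmetric] G_def[symmetric]
    using K by (cases "enn2ereal pos"; cases "enn2ereal neg"; cases "enn2ereal G") auto
qed

lemma ereal_minus_enn2ereal_strict_antimono:
  fixes A B :: ennreal
  assumes "A < B"
  shows "ereal K - enn2ereal B < ereal K - enn2ereal A"
proof -
  have "enn2ereal A < enn2ereal B"
    using assms by (simp add: less_ennreal.rep_eq)
  then show ?thesis
    by (cases "enn2ereal A"; cases "enn2ereal B") auto
qed

lemma exp_utility_cara:
  assumes "prob_space M" and [measurable]: "X \<in> borel_measurable M" "I \<in> borel_measurable borel"
    and u_deriv: "\<forall>x. (u has_real_derivative exp (- \<gamma> * x)) (at x)" and "0 < \<gamma>"
  shows "exp_utility M u w k X I = ereal (u 0 + 1 / \<gamma>) - enn2ereal (ennreal (exp (- \<gamma> * w) / \<gamma>) *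
           (\<integral>\<^sup>+\<omega>. ennreal (exp (\<gamma> * (premium M k (\<lambda>\<omega>. I (X \<omega>)) + X \<omega> - I (X \<omega>)))) \<partial>M))"
proof -
  define \<pi> where "\<pi> = premium M k (\<lambda>\<omega>. I (X \<omega>))"
  define C where "C = exp (- \<gamma> * w) / \<gamma>"
  have "0 < C"
    unfolding C_def using \<open>0 < \<gamma>\<close> by simp
  have "u (w - X \<omega> + I (X \<omega>) - \<pi>) = u 0 + 1 / \<gamma> - C * exp (\<gamma> * (\<pi> + X \<omega> - I (X \<omega>)))" for \<omega>
  proof -
    have "exp (- \<gamma> * (w - X \<omega> + I (X \<omega>) - \<pi>)) = exp (- \<gamma> * w) * exp (\<gamma> * (\<pi> + X \<omega> - I (X \<omega>)))"
      by (simp add: exp_add[symmetric] algebra_simps)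
    then show ?thesis
      unfolding C_def using \<open>0 < \<gamma>\<close> by (subst cara_utility_eq[OF u_deriv]) auto
  qed
  then have "exp_utility M u w k X I
      = ext_expectation M (\<lambda>\<omega>. u 0 + 1 / \<gamma> - C * exp (\<gamma> * (\<pi> + X \<omega> - I (X \<omega>))))"
    unfolding exp_utility_def \<pi>_def by simp
  also have "\<dots> = ereal (u 0 + 1 / \<gamma>) - enn2ereal (\<integral>\<^sup>+\<omega>. ennreal (C * exp (\<gamma> * (\<pi> + X \<omega> - I (X \<omega>)))) \<partial>M)"
    by (rule ext_expectation_const_diff) (use assms \<open>0 < C\<close> in auto)
  also have "(\<integral>\<^sup>+\<omega>. ennreal (C * exp (\<gamma> * (\<pi> + X \<omega> - I (X \<omega>)))) \<partial>M)
      = ennreal C * (\<integral>\<^sup>+\<omega>. ennreal (exp (\<gamma> * (\<pi> + X \<omega> - I (X \<omega>)))) \<partial>M)"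
    using \<open>0 < C\<close> by (simp add: ennreal_mult nn_integral_cmult)
  finally show ?thesis
    unfolding C_def \<pi>_def .
qed

lemma exp_utility_less:
  assumes "prob_space M" and "X \<in> borel_measurable M"
    and "I \<in> borel_measurable borel" "J \<in> borel_measurable borel"
    and "\<forall>x. (u has_real_derivative exp (- \<gamma> * x)) (at x)" and "0 < \<gamma>"
    and "(\<integral>\<^sup>+\<omega>. ennreal (exp (\<gamma> * (premium M k (\<lambda>\<omega>. I (X \<omega>)) + X \<omega> - I (X \<omega>)))) \<partial>M)
       < (\<integral>\<^sup>+\<omega>. ennreal (exp (\<gamma> * (premium M k (\<lambda>\<omega>. J (X \<omega>)) + X \<omega> - J (X \<omega>)))) \<partial>M)"
  shows "exp_utility M u w k X J < exp_utility M u w k X I"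
  unfolding exp_utility_cara[OF assms(1,2,3,5,6)] exp_utility_cara[OF assms(1,2,4,5,6)]
  using assms(6,7)
  by (intro ereal_minus_enn2ereal_strict_antimono ennreal_mult_strict_left_mono) auto

lemma nn_integral_layer_cake:
  fixes X :: "'a \<Rightarrow> real" and g :: "real \<Rightarrow> ennreal"
  assumes "sigma_finite_measure M"
    and [measurable]: "X \<in> borel_measurable M" "g \<in> borel_measurable borel"
  shows "(\<integral>\<^sup>+\<omega>. (\<integral>\<^sup>+t. g t * indicator {0..<X \<omega>} t \<partial>lborel) \<partial>M)
       = (\<integral>\<^sup>+t. g t * indicator {0..} t * emeasure M {\<omega>\<in>space M. t < X \<omega>} \<partial>lborel)"
proof -
  interpret pair_sigma_finite lborel M
    using assms(1) by (simp add: pair_sigma_finite_def lborel.sigma_finite_measure_axioms)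
  have "(\<lambda>(t, \<omega>). g t * indicator {0..<X \<omega>} t)
      = (\<lambda>p. g (fst p) * (if 0 \<le> fst p \<and> fst p < X (snd p) then 1 else 0))"
    by (auto simp: fun_eq_iff split: split_indicator)
  then have measurable: "(\<lambda>(t, \<omega>). g t * indicator {0..<X \<omega>} t) \<in> borel_measurable (lborel \<Otimes>\<^sub>M M)"
    by simp
  have "(\<integral>\<^sup>+\<omega>. (\<integral>\<^sup>+t. g t * indicator {0..<X \<omega>} t \<partial>lborel) \<partial>M)
      = (\<integral>\<^sup>+t. (\<integral>\<^sup>+\<omega>. g t * indicator {0..<X \<omega>} t \<partial>M) \<partial>lborel)"
    using Fubini'[OF measurable] by simp
  also have "\<dots> = (\<integral>\<^sup>+t. (\<integral>\<^sup>+\<omega>. (g t * indicator {0..} t) * indicator {\<omega>\<in>space M. t < X \<omega>} \<omega> \<partial>M) \<partial>lborel)"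
    by (intro nn_integral_cong) (auto split: split_indicator)
  also have "\<dots> = (\<integral>\<^sup>+t. g t * indicator {0..} t * emeasure M {\<omega>\<in>space M. t < X \<omega>} \<partial>lborel)"
    by (intro nn_integral_cong nn_integral_cmult_indicator) measurable
  finally show ?thesis .
qed

lemma nn_integral_exp_Ico:
  fixes a c d :: real
  assumes "0 \<le> a" "c \<noteq> 0" "0 \<le> d"
  shows "(\<integral>\<^sup>+t. ennreal (a * exp (c * t)) * indicator {0..<d} t \<partial>lborel) = ennreal (a * (exp (c * d) - 1) / c)"
proof -
  have "(\<integral>\<^sup>+t. ennreal (a * exp (c * t)) * indicator {0..<d} t \<partial>lborel)
      = (\<integral>\<^sup>+t. ennreal (a * exp (c * t)) * indicator {0..d} t \<partial>lborel)"
    by (rule nn_integral_cong_AE) (use AE_lborel_singleton[of d] in \<open>auto split: split_indicator\<close>)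
  also have "\<dots> = a * exp (c * d) / c - a * exp (c * 0) / c"
    by (rule nn_integral_FTC_Icc) (use assms in \<open>auto intro!: derivative_eq_intros\<close>)
  also have "a * exp (c * d) / c - a * exp (c * 0) / c = a * (exp (c * d) - 1) / c"
    by (simp add: diff_divide_distrib right_diff_distrib)
  finally show ?thesis .
qed

lemma nn_integral_exp_Ici:
  fixes a c :: real
  assumes "0 \<le> a" "c < 0"
  shows "(\<integral>\<^sup>+t. ennreal (a * exp (c * t)) * indicator {0..} t \<partial>lborel) = ennreal (- a / c)"
proof -
  have "((\<lambda>t. a * exp (c * t) / c) \<longlongrightarrow> 0) at_top"
    using \<open>c < 0\<close> by real_asymp
  then have "(\<integral>\<^sup>+t. ennreal (a * exp (c * t)) * indicator {0..} t \<partial>lborel) = 0 - a * exp (c * 0) / c"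
    by (rule nn_integral_FTC_atLeast[rotated 3]) (use assms in \<open>auto intro!: derivative_eq_intros\<close>)
  then show ?thesis
    by simp
qed

lemma emeasure_lborel_Ici: "emeasure lborel {a::real..} = \<infinity>"
proof (rule ccontr)
  assume "emeasure lborel {a..} \<noteq> \<infinity>"
  then obtain r where r: "emeasure lborel {a..} = ennreal r" "0 \<le> r"
    by (cases "emeasure lborel {a..}" rule: ennreal_cases) auto
  have "emeasure lborel {a..a + r + 1} \<le> emeasure lborel {a..}"
    by (rule emeasure_mono) auto
  then show False
    using r by (simp add: ennreal_le_iff)
qed

lemma nn_integral_exp_Ici_eq_top:
  fixes a c :: real
  assumes "0 < a" "0 \<le> c"
  shows "(\<integral>\<^sup>+t. ennreal (a * exp (c * t)) * indicator {0..} t \<partial>lborel) = \<infinity>"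
proof -
  have "(\<integral>\<^sup>+(t::real). ennreal a * indicator {0..} t \<partial>lborel)
      \<le> (\<integral>\<^sup>+t. ennreal (a * exp (c * t)) * indicator {0..} t \<partial>lborel)"
    by (rule nn_integral_mono) (use assms in \<open>auto split: split_indicator intro!: ennreal_leI\<close>)
  moreover have "(\<integral>\<^sup>+(t::real). ennreal a * indicator {0..} t \<partial>lborel) = \<infinity>"
    using assms by (subst nn_integral_cmult_indicator) (auto simp: emeasure_lborel_Ici ennreal_mult_top)
  ultimately show ?thesis
    by (simp add: top_unique)
qed

lemma nn_integral_exp_layer_cake:
  fixes Y :: "'a \<Rightarrow> real"
  assumes "prob_space M" and [measurable]: "Y \<in> borel_measurable M"
    and Y_nonneg: "\<And>\<omega>. \<omega> \<in> space M \<Longrightarrow> 0 \<le> Y \<omega>" and "0 < \<gamma>"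
  shows "(\<integral>\<^sup>+\<omega>. ennreal (exp (\<gamma> * Y \<omega>)) \<partial>M)
     = 1 + (\<integral>\<^sup>+t. ennreal (\<gamma> * exp (\<gamma> * t)) * indicator {0..} t * emeasure M {\<omega>\<in>space M. t < Y \<omega>} \<partial>lborel)"
proof -
  interpret prob_space M by fact
  have "ennreal (exp (\<gamma> * Y \<omega>)) = 1 + ennreal (exp (\<gamma> * Y \<omega>) - 1)" if "\<omega> \<in> space M" for \<omega>
  proof -
    have "1 \<le> exp (\<gamma> * Y \<omega>)"
      using Y_nonneg[OF that] \<open>0 < \<gamma>\<close> by simp
    then show ?thesis
      using ennreal_plus[of 1 "exp (\<gamma> * Y \<omega>) - 1"] by simp
  qed
  then have "(\<integral>\<^sup>+\<omega>. ennreal (exp (\<gamma> * Y \<omega>)) \<partial>M) = (\<integral>\<^sup>+\<omega>. 1 + ennreal (exp (\<gamma> * Y \<omega>) - 1) \<partial>M)"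
    by (rule nn_integral_cong)
  also have "\<dots> = 1 + (\<integral>\<^sup>+\<omega>. ennreal (exp (\<gamma> * Y \<omega>) - 1) \<partial>M)"
    by (subst nn_integral_add) (auto simp: emeasure_space_1)
  also have "(\<integral>\<^sup>+\<omega>. ennreal (exp (\<gamma> * Y \<omega>) - 1) \<partial>M)
      = (\<integral>\<^sup>+\<omega>. (\<integral>\<^sup>+t. ennreal (\<gamma> * exp (\<gamma> * t)) * indicator {0..<Y \<omega>} t \<partial>lborel) \<partial>M)"
    using Y_nonneg \<open>0 < \<gamma>\<close> by (intro nn_integral_cong) (simp add: nn_integral_exp_Ico)
  also have "\<dots> = (\<integral>\<^sup>+t. ennreal (\<gamma> * exp (\<gamma> * t)) * indicator {0..} t * emeasure M {\<omega>\<in>space M. t < Y \<omega>} \<partial>lborel)"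
    by (rule nn_integral_layer_cake) (auto simp: sigma_finite_measure_axioms)
  finally show ?thesis .
qed

lemma ktilde_bounds:
  assumes "0 \<le> \<theta>" "0 \<le> \<alpha>" "0 \<le> p" "p \<le> 1"
  shows "0 \<le> ktilde \<theta> \<alpha> p" "ktilde \<theta> \<alpha> p \<le> (1 + \<theta> + \<alpha>) * p"
proof -
  have "0 \<le> p - p\<^sup>2" "p - p\<^sup>2 \<le> p"
    using assms(3,4) by (auto simp: power2_eq_square mult_left_le_one_le)
  then have "0 \<le> \<alpha> * (p - p\<^sup>2)" "\<alpha> * (p - p\<^sup>2) \<le> \<alpha> * p"
    using assms(2) by (auto intro: mult_left_mono)
  moreover have "0 \<le> (1 + \<theta>) * p" "(1 + \<theta> + \<alpha>) * p = (1 + \<theta>) * p + \<alpha> * p"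
    using assms(1,3) by (auto simp: algebra_simps)
  ultimately show "0 \<le> ktilde \<theta> \<alpha> p" "ktilde \<theta> \<alpha> p \<le> (1 + \<theta> + \<alpha>) * p"
    unfolding ktilde_def by linarith+
qed

lemma premium_zero:
  assumes "k 0 = 0"
  shows "premium M k (\<lambda>\<omega>. 0) = 0"
proof -
  have "premium M k (\<lambda>\<omega>. 0) = (LINT (t::real):{0..}|lborel. 0)"
    unfolding premium_def
    by (intro set_lebesgue_integral_cong) (auto simp: survival_def assms)
  then show ?thesis
    by simp
qed

lemma survival_deductible:
  assumes "0 \<le> t"
  shows "survival M (\<lambda>\<omega>. max (Y \<omega> - d) 0) t = survival M Y (t + d)"
proof -
  have "{\<omega> \<in> space M. t < max (Y \<omega> - d) 0} = {\<omega> \<in> space M. t + d < Y \<omega>}"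
    using assms by auto
  then show ?thesis
    unfolding survival_def by simp
qed

lemma deductible_in_Ic: "0 \<le> d \<Longrightarrow> (\<lambda>x. max (x - d) 0) \<in> Ic"
  unfolding Ic_def by auto

lemma exp_mult_less_of_linear:
  fixes r s x :: real
  assumes "0 \<le> 1 + r" "(1 + r) * x < r * s"
  shows "exp x * (1 + r * (1 - s)) < 1 + r"
proof -
  have "1 + r * (1 - s) < (1 + r) * (1 - x)"
    using assms(2) by (simp add: algebra_simps)
  then have "exp x * (1 + r * (1 - s)) < exp x * ((1 + r) * (1 - x))"
    by simp
  also have "\<dots> = (1 + r) * (exp x * (1 - x))"
    by simp
  also have "\<dots> \<le> 1 + r"
  proof -
    have "1 - x \<le> exp (- x)"
      using exp_ge_add_one_self[of "- x"] by simp
    then have "exp x * (1 - x) \<le> exp x * exp (- x)"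
      by simp
    then have "exp x * (1 - x) \<le> 1"
      by (simp add: exp_minus_inverse)
    then show ?thesis
      using assms(1) by (simp add: mult_left_le)
  qed
  finally show ?thesis .
qed

lemma mult_exp_neg_divide_less:
  fixes a b :: real
  assumes "0 < b"
  shows "a * exp (- (a / b)) < b"
proof -
  have "a / b < exp (a / b)"
    using exp_ge_add_one_self[of "a / b"] by linarith
  then have "a < b * exp (a / b)"
    using assms by (simp add: pos_divide_less_eq mult.commute)
  then show ?thesis
    by (simp add: exp_minus field_simps)
qed

text \<open>The deductible d is chosen so that \<gamma> d = (1 + r) c (\<lambda> - \<gamma>) / \<lambda>: then the crude bound
  \<gamma> d < exp (\<gamma> d) already makes the premium loading smaller than the saving on the retained risk.\<close>

lemma exp_premium_mult_less:
  fixes q \<gamma> lam c \<pi> :: real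
  defines "r \<equiv> q * \<gamma> / (lam - \<gamma>)"
  defines "d \<equiv> (1 + r) * c * (lam - \<gamma>) / (lam * \<gamma>)"
  assumes "0 < q" "0 < \<gamma>" "\<gamma> < lam" "0 < c"
    and \<pi>_le: "\<pi> \<le> c * q * exp (- lam * d) / lam"
  shows "exp (\<gamma> * \<pi>) * (1 + r * (1 - exp (- (lam - \<gamma>) * d))) < 1 + r"
proof -
  define \<mu> where "\<mu> = lam - \<gamma>"
  define s where "s = exp (- \<mu> * d)"
  define x where "x = \<gamma> * (c * q * exp (- lam * d) / lam)"
  have "0 < \<mu>" "0 < lam" "0 < r"
    using assms(3-5) unfolding \<mu>_def r_def by auto
  then have "0 \<le> d"
    unfolding d_def \<mu>_def using assms(4,6) by (intro divide_nonneg_pos mult_nonneg_nonneg) auto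
  then have "s \<le> 1"
    unfolding s_def using \<open>0 < \<mu>\<close> by simp
  have "\<gamma> * d = (1 + r) * c * \<mu> / lam"
    unfolding d_def \<mu>_def using assms(4) by simp
  then have "(1 + r) * c * \<mu> * exp (- \<gamma> * d) < lam"
    using mult_exp_neg_divide_less[OF \<open>0 < lam\<close>, of "(1 + r) * c * \<mu>"] by simp
  have "exp (- lam * d) = s * exp (- \<gamma> * d)"
    unfolding s_def \<mu>_def by (simp add: exp_add[symmetric] algebra_simps)
  then have "(1 + r) * x = (1 + r) * c * \<mu> * exp (- \<gamma> * d) * (\<gamma> * q * s / (\<mu> * lam))"
    unfolding x_def using \<open>0 < \<mu>\<close> by simp
  also have "\<dots> < lam * (\<gamma> * q * s / (\<mu> * lam))"
    using \<open>(1 + r) * c * \<mu> * exp (- \<gamma> * d) < lam\<close> assms(3,4) \<open>0 < \<mu>\<close> \<open>0 < lam\<close>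
    unfolding s_def by (intro mult_strict_right_mono) auto
  also have "\<dots> = r * s"
    unfolding r_def \<mu>_def using \<open>0 < lam\<close> by simp
  finally have "(1 + r) * x < r * s" .
  have "\<gamma> * \<pi> \<le> x"
    unfolding x_def using \<pi>_le assms(4) by (intro mult_left_mono) auto
  then have "exp (\<gamma> * \<pi>) * (1 + r * (1 - s)) \<le> exp x * (1 + r * (1 - s))"
    using \<open>0 < r\<close> \<open>s \<le> 1\<close> by (intro mult_right_mono) auto
  also have "\<dots> < 1 + r"
    using \<open>(1 + r) * x < r * s\<close> \<open>0 < r\<close> by (intro exp_mult_less_of_linear) auto
  finally show ?thesis
    unfolding s_def \<mu>_def .
qed

locale exponential_loss = prob_space M for M :: "'a measure" +
  fixes X :: "'a \<Rightarrow> real" and q lam :: real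
  assumes X_measurable[measurable]: "X \<in> borel_measurable M"
    and X_nonneg: "\<And>\<omega>. \<omega> \<in> space M \<Longrightarrow> 0 \<le> X \<omega>"
    and q_pos: "0 < q" and q_le_1: "q \<le> 1" and lam_pos: "0 < lam"
    and survival_X: "\<And>t. 0 \<le> t \<Longrightarrow> survival M X t = q * exp (- lam * t)"
begin

lemma emeasure_X_greater:
  "0 \<le> t \<Longrightarrow> emeasure M {\<omega>\<in>space M. t < X \<omega>} = ennreal (q * exp (- lam * t))"
  using survival_X by (simp add: survival_def emeasure_eq_measure)

lemma nn_integral_exp_X_layer_cake:
  assumes "0 < \<gamma>"
  shows "(\<integral>\<^sup>+\<omega>. ennreal (exp (\<gamma> * X \<omega>)) \<partial>M)
       = 1 + (\<integral>\<^sup>+t. ennreal (q * \<gamma> * exp ((\<gamma> - lam) * t)) * indicator {0..} t \<partial>lborel)"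
proof -
  have "ennreal (\<gamma> * exp (\<gamma> * t)) * indicator {0..} t * emeasure M {\<omega>\<in>space M. t < X \<omega>}
      = ennreal (q * \<gamma> * exp ((\<gamma> - lam) * t)) * indicator {0..} t" for t
    using assms q_pos
    by (cases "0 \<le> t") (auto simp: emeasure_X_greater ennreal_mult'[symmetric] exp_diff exp_minus field_simps)
  then show ?thesis
    using assms by (simp add: nn_integral_exp_layer_cake[OF prob_space_axioms] X_nonneg)
qed

lemma nn_integral_exp_X_eq_top:
  assumes "lam \<le> \<gamma>"
  shows "(\<integral>\<^sup>+\<omega>. ennreal (exp (\<gamma> * X \<omega>)) \<partial>M) = \<infinity>"
  using assms q_pos lam_pos by (simp add: nn_integral_exp_X_layer_cake nn_integral_exp_Ici_eq_top)

lemma nn_integral_exp_X: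
  assumes "0 < \<gamma>" "\<gamma> < lam"
  shows "(\<integral>\<^sup>+\<omega>. ennreal (exp (\<gamma> * X \<omega>)) \<partial>M) = ennreal (1 + q * \<gamma> / (lam - \<gamma>))"
proof -
  have "(\<integral>\<^sup>+t. ennreal (q * \<gamma> * exp ((\<gamma> - lam) * t)) * indicator {0..} t \<partial>lborel)
      = ennreal (q * \<gamma> / (lam - \<gamma>))"
    using assms q_pos by (subst nn_integral_exp_Ici) (auto simp: minus_divide_right)
  then show ?thesis
    using assms q_pos ennreal_plus[of 1 "q * \<gamma> / (lam - \<gamma>)"] by (simp add: nn_integral_exp_X_layer_cake)
qed

lemma nn_integral_exp_min_X:
  assumes "0 < \<gamma>" "\<gamma> < lam" "0 \<le> d"
  shows "(\<integral>\<^sup>+\<omega>. ennreal (exp (\<gamma> * min (X \<omega>) d)) \<partial>M)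
       = ennreal (1 + q * \<gamma> / (lam - \<gamma>) * (1 - exp (- (lam - \<gamma>) * d)))"
proof -
  have "ennreal (\<gamma> * exp (\<gamma> * t)) * indicator {0..} t * emeasure M {\<omega>\<in>space M. t < min (X \<omega>) d}
      = ennreal (q * \<gamma> * exp ((\<gamma> - lam) * t)) * indicator {0..<d} t" for t
  proof (cases "0 \<le> t \<and> t < d")
    case True
    then have "{\<omega>\<in>space M. t < min (X \<omega>) d} = {\<omega>\<in>space M. t < X \<omega>}"
      by auto
    then show ?thesis
      using True assms q_pos
      by (auto simp: emeasure_X_greater ennreal_mult'[symmetric] exp_diff exp_minus field_simps)
  qed auto
  then have "(\<integral>\<^sup>+\<omega>. ennreal (exp (\<gamma> * min (X \<omega>) d)) \<partial>M)
      = 1 + (\<integral>\<^sup>+t. ennreal (q * \<gamma> * exp ((\<gamma> - lam) * t)) * indicator {0..<d} t \<partial>lborel)"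
    using assms by (simp add: nn_integral_exp_layer_cake[OF prob_space_axioms] X_nonneg)
  also have "(\<integral>\<^sup>+t. ennreal (q * \<gamma> * exp ((\<gamma> - lam) * t)) * indicator {0..<d} t \<partial>lborel)
      = ennreal (q * \<gamma> / (lam - \<gamma>) * (1 - exp (- (lam - \<gamma>) * d)))"
    using assms q_pos by (subst nn_integral_exp_Ico) (auto intro!: arg_cong[where f = ennreal] simp: field_simps)
  also have "1 + ennreal (q * \<gamma> / (lam - \<gamma>) * (1 - exp (- (lam - \<gamma>) * d)))
      = ennreal (1 + q * \<gamma> / (lam - \<gamma>) * (1 - exp (- (lam - \<gamma>) * d)))"
  proof -
    have "exp (- (lam - \<gamma>) * d) \<le> 1"
      using assms by (simp add: mult_nonpos_nonneg)
    then have "0 \<le> q * \<gamma> / (lam - \<gamma>) * (1 - exp (- (lam - \<gamma>) * d))"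
      using assms q_pos by simp
    then show ?thesis
      using ennreal_plus[of 1] by simp
  qed
  finally show ?thesis .
qed

lemma nn_integral_exp_deductible:
  "(\<integral>\<^sup>+\<omega>. ennreal (exp (\<gamma> * (\<pi> + X \<omega> - max (X \<omega> - d) 0))) \<partial>M)
     = ennreal (exp (\<gamma> * \<pi>)) * (\<integral>\<^sup>+\<omega>. ennreal (exp (\<gamma> * min (X \<omega>) d)) \<partial>M)"
proof -
  have "exp (\<gamma> * (\<pi> + X \<omega> - max (X \<omega> - d) 0)) = exp (\<gamma> * \<pi>) * exp (\<gamma> * min (X \<omega>) d)" for \<omega>
    by (simp add: exp_add[symmetric] algebra_simps min_def max_def)
  then show ?thesis
    by (simp add: ennreal_mult nn_integral_cmult)
qed

lemma premium_deductible_le: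
  assumes "0 \<le> \<theta>" "0 \<le> \<alpha>" "0 \<le> d"
  shows "premium M (ktilde \<theta> \<alpha>) (\<lambda>\<omega>. max (X \<omega> - d) 0) \<le> (1 + \<theta> + \<alpha>) * q * exp (- lam * d) / lam"
proof -
  define f where "f t = ktilde \<theta> \<alpha> (q * exp (- lam * (t + d)))" for t
  define a where "a = (1 + \<theta> + \<alpha>) * q * exp (- lam * d)"
  have f_bounds: "0 \<le> f t \<and> f t \<le> a * exp (- lam * t)" if "0 \<le> t" for t
  proof -
    have "exp (- lam * (t + d)) \<le> 1"
      using lam_pos that assms(3) by simp
    then have "q * exp (- lam * (t + d)) \<le> 1"
      using q_pos q_le_1 by (meson exp_ge_zero less_eq_real_def mult_le_one)
    moreover have "a * exp (- lam * t) = (1 + \<theta> + \<alpha>) * (q * exp (- lam * (t + d)))"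
      unfolding a_def by (simp add: algebra_simps exp_add[symmetric])
    ultimately show ?thesis
      unfolding f_def using ktilde_bounds[OF assms(1,2)] q_pos by simp
  qed
  have "premium M (ktilde \<theta> \<alpha>) (\<lambda>\<omega>. max (X \<omega> - d) 0) = (LINT t:{0..}|lborel. f t)"
    unfolding premium_def f_def
    by (intro set_lebesgue_integral_cong) (auto simp: survival_deductible survival_X assms(3))
  also have "\<dots> \<le> a / lam"
    unfolding set_lebesgue_integral_def
  proof (rule integral_real_bounded)
    have "(\<integral>\<^sup>+t. ennreal (indicator {0..} t *\<^sub>R f t) \<partial>lborel)
        \<le> (\<integral>\<^sup>+t. ennreal (a * exp (- lam * t)) * indicator {0..} t \<partial>lborel)"
      using f_bounds by (intro nn_integral_mono) (auto split: split_indicator intro!: ennreal_leI)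
    also have "\<dots> = ennreal (a / lam)"
      using nn_integral_exp_Ici[of a "- lam"] q_pos lam_pos assms unfolding a_def by simp
    finally show "(\<integral>\<^sup>+t. ennreal (indicator {0..} t *\<^sub>R f t) \<partial>lborel) \<le> ennreal (a / lam)" .
    show "0 \<le> a / lam"
      unfolding a_def using assms q_pos lam_pos by simp
  qed
  finally show ?thesis
    unfolding a_def .
qed

lemma nn_integral_deductible_less_no_insurance_light_tail:
  assumes "0 \<le> \<theta>" "0 \<le> \<alpha>" "0 < \<gamma>" "\<gamma> < lam"
  shows "\<exists>d\<ge>0. (\<integral>\<^sup>+\<omega>. ennreal (exp (\<gamma> * (premium M (ktilde \<theta> \<alpha>) (\<lambda>\<omega>. max (X \<omega> - d) 0)
                                      + X \<omega> - max (X \<omega> - d) 0))) \<partial>M)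
               < (\<integral>\<^sup>+\<omega>. ennreal (exp (\<gamma> * X \<omega>)) \<partial>M)"
proof -
  define r where "r = q * \<gamma> / (lam - \<gamma>)"
  define d where "d = (1 + r) * (1 + \<theta> + \<alpha>) * (lam - \<gamma>) / (lam * \<gamma>)"
  define \<pi> where "\<pi> = premium M (ktilde \<theta> \<alpha>) (\<lambda>\<omega>. max (X \<omega> - d) 0)"
  have "0 < r"
    unfolding r_def using assms(3,4) q_pos by simp
  then have "0 \<le> d"
    unfolding d_def using assms by (intro divide_nonneg_pos mult_nonneg_nonneg) auto
  have "(\<integral>\<^sup>+\<omega>. ennreal (exp (\<gamma> * (\<pi> + X \<omega> - max (X \<omega> - d) 0))) \<partial>M)
      = ennreal (exp (\<gamma> * \<pi>)) * ennreal (1 + r * (1 - exp (- (lam - \<gamma>) * d)))"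
    using assms(3,4) \<open>0 \<le> d\<close> by (simp add: nn_integral_exp_deductible nn_integral_exp_min_X r_def)
  also have "\<dots> = ennreal (exp (\<gamma> * \<pi>) * (1 + r * (1 - exp (- (lam - \<gamma>) * d))))"
    by (rule ennreal_mult'[symmetric]) simp
  also have "\<dots> < ennreal (1 + r)"
  proof (rule ennreal_lessI)
    have "\<pi> \<le> (1 + \<theta> + \<alpha>) * q * exp (- lam * d) / lam"
      unfolding \<pi>_def using premium_deductible_le[OF assms(1,2) \<open>0 \<le> d\<close>] .
    then show "exp (\<gamma> * \<pi>) * (1 + r * (1 - exp (- (lam - \<gamma>) * d))) < 1 + r"
      unfolding r_def d_def using q_pos assms by (intro exp_premium_mult_less) auto
  qed (use \<open>0 < r\<close> in simp)
  also have "\<dots> = (\<integral>\<^sup>+\<omega>. ennreal (exp (\<gamma> * X \<omega>)) \<partial>M)"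
    unfolding r_def using assms(3,4) by (simp add: nn_integral_exp_X)
  finally show ?thesis
    unfolding \<pi>_def using \<open>0 \<le> d\<close> by blast
qed

lemma nn_integral_deductible_less_no_insurance_heavy_tail:
  assumes "lam \<le> \<gamma>"
  shows "(\<integral>\<^sup>+\<omega>. ennreal (exp (\<gamma> * (\<pi> + X \<omega> - max (X \<omega> - d) 0))) \<partial>M)
       < (\<integral>\<^sup>+\<omega>. ennreal (exp (\<gamma> * X \<omega>)) \<partial>M)"
proof -
  have "(\<integral>\<^sup>+\<omega>. ennreal (exp (\<gamma> * min (X \<omega>) d)) \<partial>M) \<le> (\<integral>\<^sup>+\<omega>. ennreal (exp (\<gamma> * d)) \<partial>M)"
    using assms lam_pos by (intro nn_integral_mono ennreal_leI) simp
  then have "(\<integral>\<^sup>+\<omega>. ennreal (exp (\<gamma> * min (X \<omega>) d)) \<partial>M) < \<infinity>"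
    by (simp add: emeasure_space_1 le_less_trans)
  then have "(\<integral>\<^sup>+\<omega>. ennreal (exp (\<gamma> * (\<pi> + X \<omega> - max (X \<omega> - d) 0))) \<partial>M) < \<infinity>"
    by (simp add: nn_integral_exp_deductible ennreal_mult_less_top)
  also have "\<infinity> = (\<integral>\<^sup>+\<omega>. ennreal (exp (\<gamma> * X \<omega>)) \<partial>M)"
    using assms by (simp add: nn_integral_exp_X_eq_top)
  finally show ?thesis .
qed

lemma nn_integral_deductible_less_no_insurance:
  assumes "0 \<le> \<theta>" "0 \<le> \<alpha>" "0 < \<gamma>"
  shows "\<exists>d\<ge>0. (\<integral>\<^sup>+\<omega>. ennreal (exp (\<gamma> * (premium M (ktilde \<theta> \<alpha>) (\<lambda>\<omega>. max (X \<omega> - d) 0)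
                                      + X \<omega> - max (X \<omega> - d) 0))) \<partial>M)
               < (\<integral>\<^sup>+\<omega>. ennreal (exp (\<gamma> * X \<omega>)) \<partial>M)"
proof (cases "\<gamma> < lam")
  case True
  then show ?thesis
    by (rule nn_integral_deductible_less_no_insurance_light_tail[OF assms])
next
  case False
  then have "lam \<le> \<gamma>"
    by simp
  show ?thesis
    by (rule exI[of _ 0]) (use nn_integral_deductible_less_no_insurance_heavy_tail[OF \<open>lam \<le> \<gamma>\<close>, of _ 0] in simp)
qed

lemma exp_utility_deductible_gt_no_insurance:
  assumes "0 \<le> \<theta>" "0 \<le> \<alpha>" "0 < \<gamma>"
    and u_deriv: "\<forall>x. (u has_real_derivative exp (- \<gamma> * x)) (at x)"
  shows "\<exists>d\<ge>0. exp_utility M u w (ktilde \<theta> \<alpha>) X (\<lambda>x. max (x - d) 0)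
               > exp_utility M u w (ktilde \<theta> \<alpha>) X (\<lambda>x. 0)"
proof -
  obtain d where "0 \<le> d"
    and less: "(\<integral>\<^sup>+\<omega>. ennreal (exp (\<gamma> * (premium M (ktilde \<theta> \<alpha>) (\<lambda>\<omega>. max (X \<omega> - d) 0)
                                           + X \<omega> - max (X \<omega> - d) 0))) \<partial>M)
               < (\<integral>\<^sup>+\<omega>. ennreal (exp (\<gamma> * X \<omega>)) \<partial>M)"
    using nn_integral_deductible_less_no_insurance[OF assms(1-3)] by blast
  have "exp_utility M u w (ktilde \<theta> \<alpha>) X (\<lambda>x. 0)
      < exp_utility M u w (ktilde \<theta> \<alpha>) X (\<lambda>x. max (x - d) 0)"
    by (rule exp_utility_less[OF prob_space_axioms X_measurable _ _ u_deriv \<open>0 < \<gamma>\<close>])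
      (use less in \<open>simp_all add: premium_zero ktilde_def\<close>)
  then show ?thesis
    using \<open>0 \<le> d\<close> by blast
qed

end

theorem proposition4p5:
  fixes M :: "'a measure" and X :: "'a \<Rightarrow> real" and u :: "real \<Rightarrow> real"
    and q lam \<theta> \<alpha> \<gamma> w :: real
  assumes "prob_space M"
    and "X \<in> borel_measurable M"
    and "\<forall>\<omega>\<in>space M. X \<omega> \<ge> 0"
    and "0 < q" and "q \<le> 1" and "0 < lam"
    and "measure M {\<omega> \<in> space M. X \<omega> = 0} = 1 - q"
    and "\<forall>t\<ge>0. survival M X t = q * exp (- lam * t)"
    and "0 \<le> \<theta>" and "0 \<le> \<alpha>" and "0 < \<gamma>"
    and "\<forall>x. (u has_real_derivative exp (- \<gamma> * x)) (at x)"
  shows "\<exists>I\<in>Ic. exp_utility M u w (ktilde \<theta> \<alpha>) X I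
                  > exp_utility M u w (ktilde \<theta> \<alpha>) X (\<lambda>x. 0)"
proof -
  \<comment> \<open>The atom P(X = 0) = 1 - q is implied by the survival function at 0.\<close>
  interpret exponential_loss M X q lam
    using assms(1-6,8) by (intro exponential_loss.intro exponential_loss_axioms.intro) auto
  obtain d where "0 \<le> d"
    and "exp_utility M u w (ktilde \<theta> \<alpha>) X (\<lambda>x. max (x - d) 0)
           > exp_utility M u w (ktilde \<theta> \<alpha>) X (\<lambda>x. 0)"
    using exp_utility_deductible_gt_no_insurance[OF assms(9-12)] by blast
  then show ?thesis
    using deductible_in_Ic by blast
qed

end
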